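(* Let $x_1,\dots,x_N$ be contexts and $\xi_1,\dots,\xi_N$ noises. For each $i$, let $\mathcal Y(x_i)\subset\mathbb R^{d(x_i)}$ be finite with no element a strict convex combination of others, $Y(x_i)$ the matrix with columns $y\in\mathcal Y(x_i)$, $\gamma_i=(c(x_i,y,\xi_i))_{y\in\mathcal Y(x_i)}$ for a cost $c$, and $\Omega_{\Delta^{\mathcal Y(x_i)}}$ a proper l.s.c. convex function with domain $\Delta^{\mathcal Y(x_i)}$ whose restriction to the affine hull of $\Delta^{\mathcal Y(x_i)}$ is Legendre-type. Let $\varphi_w$, $w\in\mathcal W$, be a statistical model with $\varphi_w(x_i)\in\mathbb R^{d(x_i)}$, and $\kappa>0$. Define $S(s,q;x_i,\xi_i)=\langle\gamma_i|q\rangle+\kappa\mathcal L_{\Omega_{\Delta^{\mathcal Y(x_i)}}}(s;q)$ and $\mathcal S_N(s_\otimes,q_\otimes)=\frac1N\sum_iS(s_i,q_i;x_i,\xi_i)$. Consider the scheme started from $\bar w^{(0)}$: $$q_\otimes^{(t+1)}=\operatorname*{argmin}_{q_\otimes\in\prod_i\Delta^{\mathcal Y(x_i)}}\mathcal S_N\big((Y(x_i)^\top\varphi_{\bar w^{(t)}}(x_i))_i,q_\otimes\big),\qquad \bar w^{(t+1)}\in\operatorname*{argmin}_{w\in\mathcal W}\mathcal S_N\big((Y(x_i)^\top\varphi_w(x_i))_i,q_\otimes^{(t+1)}\big).$$ Then these updates can be recast as: for each $i$, $$q_i^{(t+1)}=\operatorname*{argmin}_{q_i\in\Delta^{\mathcal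 Y(x_i)}}S\big(Y(x_i)^\top\varphi_{\bar w^{(t)}}(x_i),q_i;x_i,\xi_i\big)=\nabla\Omega^*_{\Delta^{\mathcal Y(x_i)}}\Big(Y(x_i)^\top\varphi_{\bar w^{(t)}}(x_i)-\tfrac1\kappa\gamma_i\Big),$$ so that $\mu_i^{(t+1)}:=Y(x_i)q_i^{(t+1)}$ is the expectation of $\mathbf y$ under the distribution $\nabla\Omega^*_{\Delta^{\mathcal Y(x_i)}}\big(Y(x_i)^\top\varphi_{\bar w^{(t)}}(x_i)-\frac1\kappa\gamma_i\big)$, and $$\bar w^{(t+1)}\in\operatorname*{argmin}_{w\in\mathcal W}\frac1N\sum_{i=1}^N\mathcal L_{\Omega_{\mathcal C(x_i)}}\big(\varphi_w(x_i);Y(x_i)q_i^{(t+1)}\big),$$ where $\Omega_{\mathcal C(x)}(\mu):=\min\{\Omega_{\Delta^{\mathcal Y(x)}}(q):q\in\Delta^{\mathcal Y(x)},\ Y(x)q=\mu\}$ on $\mathcal C(x)=\operatorname{conv}(\mathcal Y(x))$.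
   Context: $\Delta^{\mathcal Y}=\{q\in\mathbb R^{\mathcal Y}:q\ge0,\sum_yq_y=1\}$. Legendre-type: strictly convex on the interior of its domain and essentially smooth (with respect to the affine hull's metric for restrictions). For a convex function $\Omega$, $\Omega^*$ denotes its Fenchel conjugate and $\mathcal L_\Omega(\theta;\mu)=\Omega(\mu)+\Omega^*(\theta)-\langle\theta|\mu\rangle$ its Fenchel–Young loss; $\Omega_{\mathcal C(x)}$ is $+\infty$ outside $\mathcal C(x)$. *)

theory Defs
  imports "HOL-Analysis.Analysis"
begin

text \<open>Vectors of R^d are modelled as functions nat => real vanishing at coordinates >= d;
  elements of R^Y (for a finite label set Y of such vectors) as functions vec => real
  vanishing outside Y.\<close>

type_synonym vec = "nat \<Rightarrow> real"
type_synonym dvec = "vec \<Rightarrow> real"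

definition Rd :: "nat \<Rightarrow> vec set" where
  "Rd d = {v. \<forall>k\<ge>d. v k = 0}"

definition ipd :: "nat \<Rightarrow> vec \<Rightarrow> vec \<Rightarrow> real" where
  "ipd d a b = (\<Sum>k<d. a k * b k)"

definition RY :: "vec set \<Rightarrow> dvec set" where
  "RY Y = {q. \<forall>v. v \<notin> Y \<longrightarrow> q v = 0}"

definition ipY :: "vec set \<Rightarrow> dvec \<Rightarrow> dvec \<Rightarrow> real" where
  "ipY Y a b = (\<Sum>y\<in>Y. a y * b y)"

definition nrmY :: "vec set \<Rightarrow> dvec \<Rightarrow> real" where
  "nrmY Y a = sqrt (ipY Y a a)"

definition prob_simplex :: "vec set \<Rightarrow> dvec set" where
  "prob_simplex Y = {q \<in> RY Y. (\<forall>y\<in>Y. 0 \<le> q y) \<and> sum q Y = 1}"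

definition ri_simplex :: "vec set \<Rightarrow> dvec set" where
  "ri_simplex Y = {q \<in> prob_simplex Y. \<forall>y\<in>Y. 0 < q y}"

definition tangent :: "vec set \<Rightarrow> dvec set" where
  "tangent Y = {h \<in> RY Y. sum h Y = 0}"

definition Ymat :: "vec set \<Rightarrow> dvec \<Rightarrow> vec" where
  "Ymat Y q = (\<lambda>k. \<Sum>y\<in>Y. q y * y k)"

definition YmatT :: "nat \<Rightarrow> vec set \<Rightarrow> vec \<Rightarrow> dvec" where
  "YmatT d Y \<phi> = (\<lambda>y. if y \<in> Y then ipd d y \<phi> else 0)"

definition has_grad_along :: "vec set \<Rightarrow> dvec set \<Rightarrow> (dvec \<Rightarrow> real) \<Rightarrow> dvec \<Rightarrow> dvec \<Rightarrow> bool" where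
  "has_grad_along Y T f q g \<longleftrightarrow> g \<in> T \<and>
     (\<forall>e>0. \<exists>\<delta>>0. \<forall>h\<in>T. nrmY Y h < \<delta> \<longrightarrow>
        \<bar>f (\<lambda>v. q v + h v) - f q - ipY Y g h\<bar> \<le> e * nrmY Y h)"

definition conjY :: "vec set \<Rightarrow> (dvec \<Rightarrow> ereal) \<Rightarrow> dvec \<Rightarrow> ereal" where
  "conjY Y \<Omega> \<theta> = (SUP q\<in>RY Y. ereal (ipY Y \<theta> q) - \<Omega> q)"

definition fyY :: "vec set \<Rightarrow> (dvec \<Rightarrow> ereal) \<Rightarrow> dvec \<Rightarrow> dvec \<Rightarrow> ereal" where
  "fyY Y \<Omega> \<theta> q = \<Omega> q + conjY Y \<Omega> \<theta> - ereal (ipY Y \<theta> q)"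

definition conjd :: "nat \<Rightarrow> (vec \<Rightarrow> ereal) \<Rightarrow> vec \<Rightarrow> ereal" where
  "conjd d F \<theta> = (SUP \<mu>\<in>Rd d. ereal (ipd d \<theta> \<mu>) - F \<mu>)"

definition fyd :: "nat \<Rightarrow> (vec \<Rightarrow> ereal) \<Rightarrow> vec \<Rightarrow> vec \<Rightarrow> ereal" where
  "fyd d F \<theta> \<mu> = F \<mu> + conjd d F \<theta> - ereal (ipd d \<theta> \<mu>)"

text \<open>Omega_C(mu) = min { Omega(q) : q in Delta^Y, Y q = mu }  (+infinity outside conv Y).\<close>
definition OmegaC :: "vec set \<Rightarrow> (dvec \<Rightarrow> ereal) \<Rightarrow> vec \<Rightarrow> ereal" where
  "OmegaC Y \<Omega> \<mu> = (INF q\<in>{q \<in> prob_simplex Y. Ymat Y q = \<mu>}. \<Omega> q)"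

definition proper_convex_dom_simplex :: "vec set \<Rightarrow> (dvec \<Rightarrow> ereal) \<Rightarrow> bool" where
  "proper_convex_dom_simplex Y \<Omega> \<longleftrightarrow>
     prob_simplex Y \<noteq> {} \<and> (\<forall>q. \<Omega> q \<noteq> -\<infinity>) \<and> (\<forall>q. \<Omega> q < \<infinity> \<longleftrightarrow> q \<in> prob_simplex Y) \<and>
     (\<forall>q1\<in>prob_simplex Y. \<forall>q2\<in>prob_simplex Y. \<forall>a\<in>{0..1}.
        \<Omega> (\<lambda>v. a * q1 v + (1 - a) * q2 v) \<le> ereal a * \<Omega> q1 + ereal (1 - a) * \<Omega> q2)"

definition lsc_Y :: "vec set \<Rightarrow> (dvec \<Rightarrow> ereal) \<Rightarrow> bool" where
  "lsc_Y Y \<Omega> \<longleftrightarrow> (\<forall>q s. q \<in> RY Y \<longrightarrow> (\<forall>n. s n \<in> RY Y) \<longrightarrow>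
      (\<forall>y\<in>Y. (\<lambda>n. s n y) \<longlonglongrightarrow> q y) \<longrightarrow> \<Omega> q \<le> liminf (\<lambda>n. \<Omega> (s n)))"

text \<open>The restriction of Omega to the affine hull {q in R^Y. sum q = 1} of Delta^Y is of
  Legendre type: strictly convex on the (relative) interior of its domain, and essentially
  smooth there (relative interior nonempty, differentiable along the affine hull, and gradient
  norms blow up along sequences approaching the relative boundary).\<close>
definition legendre_aff_simplex :: "vec set \<Rightarrow> (dvec \<Rightarrow> ereal) \<Rightarrow> bool" where
  "legendre_aff_simplex Y \<Omega> \<longleftrightarrow>
     (\<forall>q1\<in>ri_simplex Y. \<forall>q2\<in>ri_simplex Y. q1 \<noteq> q2 \<longrightarrow> (\<forall>a\<in>{0<..<1}.
        \<Omega> (\<lambda>v. a * q1 v + (1 - a) * q2 v) < ereal a * \<Omega> q1 + ereal (1 - a) * \<Omega> q2)) \<and>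
     ri_simplex Y \<noteq> {} \<and>
     (\<forall>q\<in>ri_simplex Y. \<exists>g. has_grad_along Y (tangent Y) (\<lambda>p. real_of_ereal (\<Omega> p)) q g) \<and>
     (\<forall>s q g. (\<forall>n. s n \<in> ri_simplex Y) \<longrightarrow> q \<in> prob_simplex Y - ri_simplex Y \<longrightarrow>
        (\<forall>y\<in>Y. (\<lambda>n. s n y) \<longlonglongrightarrow> q y) \<longrightarrow>
        (\<forall>n. has_grad_along Y (tangent Y) (\<lambda>p. real_of_ereal (\<Omega> p)) (s n) (g n)) \<longrightarrow>
        filterlim (\<lambda>n. nrmY Y (g n)) at_top sequentially)"

definition no_convex_comb :: "vec set \<Rightarrow> bool" where
  "no_convex_comb Y \<longleftrightarrow> (\<forall>y\<in>Y. \<not> (\<exists>l. (\<forall>z\<in>Y - {y}. 0 \<le> l z) \<and> sum l (Y - {y}) = 1 \<and>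
      (\<forall>k. (\<Sum>z\<in>Y - {y}. l z * z k) = y k)))"

definition gam :: "('x \<Rightarrow> vec set) \<Rightarrow> ('x \<Rightarrow> vec \<Rightarrow> 'n \<Rightarrow> real) \<Rightarrow> 'x \<Rightarrow> 'n \<Rightarrow> dvec" where
  "gam Ys c x \<xi> = (\<lambda>y. if y \<in> Ys x then c x y \<xi> else 0)"

definition Sloss :: "vec set \<Rightarrow> (dvec \<Rightarrow> ereal) \<Rightarrow> real \<Rightarrow> dvec \<Rightarrow> dvec \<Rightarrow> dvec \<Rightarrow> ereal" where
  "Sloss Y \<Omega> \<kappa> \<gamma> s q = ereal (ipY Y \<gamma> q) + ereal \<kappa> * fyY Y \<Omega> s q"

definition SN :: "nat \<Rightarrow> ('x \<Rightarrow> vec set) \<Rightarrow> ('x \<Rightarrow> dvec \<Rightarrow> ereal) \<Rightarrow> real \<Rightarrow>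
    ('x \<Rightarrow> vec \<Rightarrow> 'n \<Rightarrow> real) \<Rightarrow> (nat \<Rightarrow> 'x) \<Rightarrow> (nat \<Rightarrow> 'n) \<Rightarrow> (nat \<Rightarrow> dvec) \<Rightarrow> (nat \<Rightarrow> dvec) \<Rightarrow> ereal" where
  "SN N Ys \<Omega> \<kappa> c x \<xi> s Q = ereal (1 / real N) *
     (\<Sum>i<N. Sloss (Ys (x i)) (\<Omega> (x i)) \<kappa> (gam Ys c (x i) (\<xi> i)) (s i) (Q i))"

definition scores :: "('x \<Rightarrow> nat) \<Rightarrow> ('x \<Rightarrow> vec set) \<Rightarrow> ('x \<Rightarrow> vec) \<Rightarrow> (nat \<Rightarrow> 'x) \<Rightarrow> nat \<Rightarrow> dvec" where
  "scores d Ys \<phi> x i = YmatT (d (x i)) (Ys (x i)) (\<phi> (x i))"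

definition prod_simplex :: "nat \<Rightarrow> ('x \<Rightarrow> vec set) \<Rightarrow> (nat \<Rightarrow> 'x) \<Rightarrow> (nat \<Rightarrow> dvec) set" where
  "prod_simplex N Ys x = {Q. \<forall>i<N. Q i \<in> prob_simplex (Ys (x i))}"

end

theory Submission
  imports Defs
begin

text \<open>
  On the simplex, \<open>S(s, q) = \<kappa> (\<Omega>\<^sup>*(s) - F\<^sub>\<theta>(q))\<close> with \<open>\<theta> = s - \<gamma>/\<kappa>\<close> and
  \<open>F\<^sub>\<theta>(q) = \<langle>\<theta>, q\<rangle> - \<Omega>(q)\<close>, so minimising \<open>S\<close> means maximising \<open>F\<^sub>\<theta>\<close>. Lower
  semicontinuity and compactness of the simplex give a maximiser. Essential smoothness forces it into
  the relative interior: at a boundary maximiser the gradients of \<open>\<Omega>\<close> along a segment into the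
  simplex would stay bounded. Strict convexity on the relative interior then makes it unique, and
  uniqueness plus compactness make it depend continuously on \<open>\<theta>\<close>, which is exactly the
  differentiability of \<open>\<Omega>\<^sup>*\<close> with gradient the maximiser (Danskin).

  The objective \<open>S\<^sub>N\<close> is a separable sum, so its minimiser over the product of simplices is the
  componentwise one. Finally \<open>\<Omega>\<^sub>C\<^sup>*(\<phi>) = \<Omega>\<^sup>*(Y\<^sup>T \<phi>)\<close>, hence
  \<open>S(Y\<^sup>T \<phi>\<^sub>w, q) = \<kappa> L\<^sub>\<Omega>\<^sub>C(\<phi>\<^sub>w; Y q)\<close> plus a term not depending on \<open>w\<close>, and the two
  problems in \<open>w\<close> have the same minimisers.
\<close>

section \<open>Euclidean structure of \<open>\<real>\<^sup>Y\<close> and the simplex\<close>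

lemma ipY_add_right: "ipY Y g (\<lambda>v. a v + b v) = ipY Y g a + ipY Y g b"
  unfolding ipY_def by (simp add: distrib_left sum.distrib)

lemma ipY_diff_right: "ipY Y g (\<lambda>v. a v - b v) = ipY Y g a - ipY Y g b"
  unfolding ipY_def by (simp add: right_diff_distrib sum_subtractf)

lemma ipY_scale_right: "ipY Y g (\<lambda>v. c * a v) = c * ipY Y g a"
  unfolding ipY_def by (simp add: sum_distrib_left mult.left_commute)

lemma ipY_add_left: "ipY Y (\<lambda>v. a v + b v) g = ipY Y a g + ipY Y b g"
  unfolding ipY_def by (simp add: distrib_right sum.distrib)

lemma ipY_commute: "ipY Y a b = ipY Y b a"
  unfolding ipY_def by (simp add: mult.commute)

lemma ipY_indicator: "finite Y \<Longrightarrow> a \<in> Y \<Longrightarrow> ipY Y g (\<lambda>v. if v = a then 1 else 0) = g a"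
  unfolding ipY_def by (simp add: if_distrib cong: if_cong)

lemma ipY_tendsto:
  assumes "\<forall>y\<in>Y. (\<lambda>n. s n y) \<longlonglongrightarrow> l y"
  shows "(\<lambda>n. ipY Y \<theta> (s n)) \<longlonglongrightarrow> ipY Y \<theta> l"
  unfolding ipY_def using assms by (intro tendsto_sum tendsto_mult tendsto_const) auto

lemma nrmY_eq_L2_set: "nrmY Y a = L2_set a Y"
  unfolding nrmY_def ipY_def L2_set_def by (simp add: power2_eq_square)

lemma nrmY_nonneg: "0 \<le> nrmY Y a"
  by (simp add: nrmY_eq_L2_set)

lemma nrmY_scale: "nrmY Y (\<lambda>v. c * a v) = \<bar>c\<bar> * nrmY Y a"
proof -
  have "ipY Y (\<lambda>v. c * a v) (\<lambda>v. c * a v) = c\<^sup>2 * ipY Y a a"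
    unfolding ipY_def by (simp add: sum_distrib_left power2_eq_square algebra_simps)
  then show ?thesis unfolding nrmY_def by (simp add: real_sqrt_mult)
qed

lemma abs_ipY_le: "\<bar>ipY Y a b\<bar> \<le> nrmY Y a * nrmY Y b"
proof -
  have "\<bar>ipY Y a b\<bar> \<le> (\<Sum>y\<in>Y. \<bar>a y\<bar> * \<bar>b y\<bar>)"
    unfolding ipY_def by (metis (no_types, lifting) abs_mult sum_abs sum.cong)
  also have "\<dots> \<le> L2_set a Y * L2_set b Y" by (rule L2_set_mult_ineq)
  finally show ?thesis by (simp add: nrmY_eq_L2_set)
qed

lemma nrmY_diff_tendsto_0:
  assumes "\<forall>y\<in>Y. (\<lambda>n. s n y) \<longlonglongrightarrow> l y"
  shows "(\<lambda>n. nrmY Y (\<lambda>v. s n v - l v)) \<longlonglongrightarrow> 0"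
proof -
  have "(\<lambda>n. sqrt (\<Sum>y\<in>Y. (s n y - l y) * (s n y - l y)))
      \<longlonglongrightarrow> sqrt (\<Sum>y\<in>Y. (l y - l y) * (l y - l y))"
    using assms by (intro tendsto_intros tendsto_sum) auto
  then show ?thesis by (simp add: nrmY_def ipY_def)
qed

lemma ipd_Ymat: "ipd d \<phi> (Ymat Y p) = ipY Y (YmatT d Y \<phi>) p"
proof -
  have "ipd d \<phi> (Ymat Y p) = (\<Sum>k<d. \<Sum>y\<in>Y. \<phi> k * (p y * y k))"
    unfolding ipd_def Ymat_def by (simp add: sum_distrib_left)
  also have "\<dots> = (\<Sum>y\<in>Y. \<Sum>k<d. \<phi> k * (p y * y k))" by (rule sum.swap)
  also have "\<dots> = (\<Sum>y\<in>Y. (\<Sum>k<d. y k * \<phi> k) * p y)"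
    by (simp add: sum_distrib_left sum_distrib_right mult_ac)
  also have "\<dots> = ipY Y (YmatT d Y \<phi>) p"
    unfolding ipY_def YmatT_def ipd_def by simp
  finally show ?thesis .
qed

lemma Ymat_in_Rd: "Y \<subseteq> Rd d \<Longrightarrow> Ymat Y p \<in> Rd d"
  unfolding Ymat_def Rd_def by (auto intro!: sum.neutral)

lemma prob_simplex_subset_RY: "prob_simplex Y \<subseteq> RY Y"
  by (auto simp: prob_simplex_def)

lemma ri_simplex_subset: "ri_simplex Y \<subseteq> prob_simplex Y"
  by (auto simp: ri_simplex_def)

lemma prob_simplex_coord_bounds:
  assumes "finite Y" "q \<in> prob_simplex Y" "y \<in> Y"
  shows "0 \<le> q y \<and> q y \<le> 1"
proof -
  have "q y \<le> sum q Y" using assms by (intro member_le_sum) (auto simp: prob_simplex_def)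
  then show ?thesis using assms by (auto simp: prob_simplex_def)
qed

lemma prob_simplex_convex_comb:
  assumes "q1 \<in> prob_simplex Y" "q2 \<in> prob_simplex Y" "0 \<le> a" "a \<le> 1"
  shows "(\<lambda>v. a * q1 v + (1 - a) * q2 v) \<in> prob_simplex Y"
proof -
  have "sum (\<lambda>v. a * q1 v + (1 - a) * q2 v) Y = a * sum q1 Y + (1 - a) * sum q2 Y"
    by (simp add: sum.distrib sum_distrib_left)
  then show ?thesis using assms by (auto simp: prob_simplex_def RY_def)
qed

lemma ri_simplex_convex_comb:
  assumes p: "p \<in> ri_simplex Y" and q: "q \<in> prob_simplex Y" and l: "0 < l" "l \<le> 1"
  shows "(\<lambda>v. l * p v + (1 - l) * q v) \<in> ri_simplex Y"
proof -
  have "(\<lambda>v. l * p v + (1 - l) * q v) \<in> prob_simplex Y"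
    using prob_simplex_convex_comb p q l ri_simplex_subset by fastforce
  moreover have "0 < l * p y + (1 - l) * q y" if "y \<in> Y" for y
    using p q l that by (intro add_pos_nonneg) (auto simp: ri_simplex_def prob_simplex_def)
  ultimately show ?thesis by (simp add: ri_simplex_def)
qed

lemma nrmY_diff_prob_simplex_le:
  assumes "q \<in> prob_simplex Y" "q' \<in> prob_simplex Y"
  shows "nrmY Y (\<lambda>v. q v - q' v) \<le> 2"
proof -
  have "nrmY Y (\<lambda>v. q v - q' v) \<le> (\<Sum>y\<in>Y. \<bar>q y - q' y\<bar>)"
    by (simp add: nrmY_eq_L2_set L2_set_le_sum_abs)
  also have "\<dots> \<le> (\<Sum>y\<in>Y. q y + q' y)"
  proof (rule sum_mono)
    fix y assume "y \<in> Y"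
    then have "0 \<le> q y" "0 \<le> q' y" using assms by (auto simp: prob_simplex_def)
    then show "\<bar>q y - q' y\<bar> \<le> q y + q' y" by linarith
  qed
  also have "\<dots> = 2" using assms by (simp add: sum.distrib prob_simplex_def)
  finally show ?thesis .
qed

definition move_mass :: "dvec \<Rightarrow> vec \<Rightarrow> vec \<Rightarrow> dvec" where
  "move_mass p b a = (\<lambda>v. p v + p b * ((if v = a then 1 else 0) - (if v = b then 1 else 0)))"

lemma move_mass_in_prob_simplex:
  assumes fin: "finite Y" and p: "p \<in> prob_simplex Y" and ab: "a \<in> Y" "b \<in> Y" "a \<noteq> b"
  shows "move_mass p b a \<in> prob_simplex Y"
proof -
  have "sum (move_mass p b a) Y = sum p Y + p b * ((\<Sum>v\<in>Y. if v = a then 1 else 0) - (\<Sum>v\<in>Y. if v = b then 1 else 0))"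
    unfolding move_mass_def by (simp add: sum.distrib sum_distrib_left[symmetric] sum_subtractf)
  also have "\<dots> = 1" using p ab fin by (simp add: prob_simplex_def)
  finally show ?thesis
    using p ab by (auto simp: prob_simplex_def RY_def move_mass_def)
qed

lemma tangent_nrmY_bound:
  assumes fin: "finite Y" and G: "G \<in> tangent Y"
    and K: "\<forall>a\<in>Y. \<forall>b\<in>Y. G a - G b \<le> K a b"
  shows "nrmY Y G \<le> real (card Y) * (\<Sum>a\<in>Y. \<Sum>b\<in>Y. \<bar>K a b\<bar>)"
proof -
  define Kt where "Kt = (\<Sum>a\<in>Y. \<Sum>b\<in>Y. \<bar>K a b\<bar>)"
  have sum_G: "sum G Y = 0" using G by (simp add: tangent_def)
  have row: "(\<Sum>b\<in>Y. \<bar>K a b\<bar>) \<le> Kt" if "a \<in> Y" for a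
    unfolding Kt_def using that fin by (intro member_le_sum) (auto intro: sum_nonneg)
  have coord: "\<bar>G a\<bar> \<le> Kt" if a: "a \<in> Y" for a
  proof -
    have card_ge_1: "1 \<le> real (card Y)"
      using a fin by (metis One_nat_def Suc_leI card_gt_0_iff empty_iff of_nat_1 of_nat_mono)
    have "real (card Y) * G a = (\<Sum>b\<in>Y. G a - G b)" using sum_G by (simp add: sum_subtractf)
    also have "\<dots> \<le> (\<Sum>b\<in>Y. \<bar>K a b\<bar>)" using K a by (intro sum_mono) force
    also have "\<dots> \<le> Kt" using row a by blast
    finally have upper: "real (card Y) * G a \<le> Kt" .
    have "- (real (card Y) * G a) = (\<Sum>b\<in>Y. G b - G a)" using sum_G by (simp add: sum_subtractf)
    also have "\<dots> \<le> (\<Sum>b\<in>Y. \<bar>K b a\<bar>)" using K a by (intro sum_mono) force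
    also have "\<dots> \<le> Kt"
      unfolding Kt_def using a fin by (intro sum_mono member_le_sum) auto
    finally have "- (real (card Y) * G a) \<le> Kt" .
    with upper have "real (card Y) * \<bar>G a\<bar> \<le> Kt" by (simp add: abs_if)
    moreover have "\<bar>G a\<bar> \<le> real (card Y) * \<bar>G a\<bar>" using card_ge_1 by (simp add: mult_le_cancel_right1)
    ultimately show ?thesis by linarith
  qed
  have "nrmY Y G \<le> (\<Sum>a\<in>Y. \<bar>G a\<bar>)" by (simp add: nrmY_eq_L2_set L2_set_le_sum_abs)
  also have "\<dots> \<le> real (card Y) * Kt" using coord sum_mono[of Y "\<lambda>a. \<bar>G a\<bar>" "\<lambda>_. Kt"] by simp
  finally show ?thesis by (simp add: Kt_def)
qed

lemma le_of_forall_le_plus_mult: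
  fixes a b D :: real
  assumes "\<And>e. 0 < e \<Longrightarrow> a \<le> b + e * D" and "0 \<le> D"
  shows "a \<le> b"
proof (rule field_le_epsilon)
  fix e :: real assume "0 < e"
  then have "a \<le> b + e / (D + 1) * D" using assms(1)[of "e / (D + 1)"] assms(2) by simp
  also have "e / (D + 1) * D \<le> e" using \<open>0 < e\<close> assms(2) by (simp add: field_simps)
  finally show "a \<le> b + e" by simp
qed

lemma finite_compact_subseq:
  fixes s :: "nat \<Rightarrow> 'a \<Rightarrow> real"
  assumes "finite Y" "compact K" "\<forall>n. \<forall>y\<in>Y. s n y \<in> K"
  shows "\<exists>r l. strict_mono r \<and> (\<forall>y\<in>Y. (\<lambda>n. s (r n) y) \<longlonglongrightarrow> l y)"
  using assms(1,3)
proof (induction Y rule: finite_induct)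
  case empty
  then show ?case by (auto intro: strict_mono_id)
next
  case (insert a Y)
  then obtain r l where r: "strict_mono r" and l: "\<forall>y\<in>Y. (\<lambda>n. s (r n) y) \<longlonglongrightarrow> l y"
    by blast
  have "\<forall>n. s (r n) a \<in> K" using insert.prems by auto
  then obtain la r' where r': "strict_mono r'" and la: "((\<lambda>n. s (r n) a) \<circ> r') \<longlonglongrightarrow> la"
    using assms(2) compact_imp_seq_compact seq_compactE by metis
  have "(\<lambda>n. s ((r \<circ> r') n) y) \<longlonglongrightarrow> (l(a := la)) y" if "y \<in> insert a Y" for y
  proof (cases "y = a")
    case False
    then have "((\<lambda>n. s (r n) y) \<circ> r') \<longlonglongrightarrow> l y"
      using l that r' LIMSEQ_subseq_LIMSEQ by auto
    then show ?thesis using False by (simp add: comp_def)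
  qed (use la in \<open>simp add: comp_def\<close>)
  moreover have "strict_mono (r \<circ> r')" using r r' by (simp add: strict_mono_o)
  ultimately show ?case by blast
qed

lemma prob_simplex_subseq:
  fixes s :: "nat \<Rightarrow> dvec"
  assumes fin: "finite Y" and s: "\<forall>n. s n \<in> prob_simplex Y"
  shows "\<exists>r l. strict_mono r \<and> l \<in> prob_simplex Y \<and> (\<forall>y\<in>Y. (\<lambda>n. s (r n) y) \<longlonglongrightarrow> l y)"
proof -
  have "\<forall>n. \<forall>y\<in>Y. s n y \<in> {0..1::real}" using s prob_simplex_coord_bounds[OF fin] by auto
  from finite_compact_subseq[OF fin compact_Icc this]
  obtain r l where r: "strict_mono r" and "\<forall>y\<in>Y. (\<lambda>n. s (r n) y) \<longlonglongrightarrow> l y"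
    by blast
  moreover define l' where "l' = (\<lambda>v. if v \<in> Y then l v else 0)"
  ultimately have l': "\<forall>y\<in>Y. (\<lambda>n. s (r n) y) \<longlonglongrightarrow> l' y" by simp
  have "0 \<le> l' y" if "y \<in> Y" for y
    using l' that s by (intro LIMSEQ_le_const[of "\<lambda>n. s (r n) y"]) (auto simp: prob_simplex_def)
  moreover have "sum l' Y = 1"
  proof -
    have "(\<lambda>n. sum (s (r n)) Y) \<longlonglongrightarrow> sum l' Y" using l' by (intro tendsto_sum) auto
    moreover have "(\<lambda>n. sum (s (r n)) Y) = (\<lambda>n. 1)" using s by (auto simp: prob_simplex_def)
    ultimately show ?thesis by (simp add: LIMSEQ_const_iff)
  qed
  ultimately have "l' \<in> prob_simplex Y" by (simp add: prob_simplex_def RY_def l'_def)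
  then show ?thesis using r l' by blast
qed

section \<open>Conjugate of a Legendre-type regulariser on the simplex\<close>

definition conj_objective :: "vec set \<Rightarrow> (dvec \<Rightarrow> ereal) \<Rightarrow> dvec \<Rightarrow> dvec \<Rightarrow> real" where
  "conj_objective Y \<Omega> \<theta> q = ipY Y \<theta> q - real_of_ereal (\<Omega> q)"

definition conj_maximizer :: "vec set \<Rightarrow> (dvec \<Rightarrow> ereal) \<Rightarrow> dvec \<Rightarrow> dvec \<Rightarrow> bool" where
  "conj_maximizer Y \<Omega> \<theta> q \<longleftrightarrow> q \<in> prob_simplex Y \<and>
     (\<forall>p\<in>prob_simplex Y. conj_objective Y \<Omega> \<theta> p \<le> conj_objective Y \<Omega> \<theta> q)"

lemma conj_objective_shift:
  "conj_objective Y \<Omega> (\<lambda>v. \<theta> v + h v) q = conj_objective Y \<Omega> \<theta> q + ipY Y h q"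
  by (simp add: conj_objective_def ipY_add_left)

lemma conj_maximizer_perturb:
  assumes q': "conj_maximizer Y \<Omega> (\<lambda>v. \<theta> v + h v) q'" and q: "q \<in> prob_simplex Y"
  shows "conj_objective Y \<Omega> \<theta> q - 2 * nrmY Y h \<le> conj_objective Y \<Omega> \<theta> q'"
proof -
  have "conj_objective Y \<Omega> \<theta> q + ipY Y h q \<le> conj_objective Y \<Omega> \<theta> q' + ipY Y h q'"
    using q' q by (simp add: conj_maximizer_def conj_objective_shift)
  moreover have "ipY Y h (\<lambda>v. q' v - q v) \<le> nrmY Y h * nrmY Y (\<lambda>v. q' v - q v)"
    using abs_ipY_le[of Y h] by (simp add: abs_le_iff)
  moreover have "nrmY Y h * nrmY Y (\<lambda>v. q' v - q v) \<le> nrmY Y h * 2"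
    using nrmY_diff_prob_simplex_le[of q' Y q] q' q nrmY_nonneg[of Y h]
    by (intro mult_left_mono) (auto simp: conj_maximizer_def)
  ultimately show ?thesis by (simp add: ipY_diff_right)
qed

locale simplex_regularizer =
  fixes Y :: "vec set" and \<Omega> :: "dvec \<Rightarrow> ereal"
  assumes finite_Y: "finite Y"
    and proper_convex: "proper_convex_dom_simplex Y \<Omega>"
    and lsc: "lsc_Y Y \<Omega>"
    and legendre: "legendre_aff_simplex Y \<Omega>"
begin

lemma Omega_finite: "q \<in> prob_simplex Y \<Longrightarrow> \<Omega> q = ereal (real_of_ereal (\<Omega> q))"
  using proper_convex unfolding proper_convex_dom_simplex_def by (cases "\<Omega> q") auto

lemma Omega_outside: "q \<notin> prob_simplex Y \<Longrightarrow> \<Omega> q = \<infinity>"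
  using proper_convex unfolding proper_convex_dom_simplex_def by (cases "\<Omega> q") auto

lemma Omega_convex_real:
  assumes "q1 \<in> prob_simplex Y" "q2 \<in> prob_simplex Y" "0 \<le> a" "a \<le> 1"
  shows "real_of_ereal (\<Omega> (\<lambda>v. a * q1 v + (1 - a) * q2 v))
     \<le> a * real_of_ereal (\<Omega> q1) + (1 - a) * real_of_ereal (\<Omega> q2)"
proof -
  have "\<Omega> (\<lambda>v. a * q1 v + (1 - a) * q2 v) \<le> ereal a * \<Omega> q1 + ereal (1 - a) * \<Omega> q2"
    using proper_convex assms unfolding proper_convex_dom_simplex_def by auto
  moreover obtain r1 where "\<Omega> q1 = ereal r1" using Omega_finite[OF assms(1)] by blast
  moreover obtain r2 where "\<Omega> q2 = ereal r2" using Omega_finite[OF assms(2)] by blast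
  moreover obtain r where "\<Omega> (\<lambda>v. a * q1 v + (1 - a) * q2 v) = ereal r"
    using Omega_finite[OF prob_simplex_convex_comb[OF assms]] by blast
  ultimately show ?thesis by simp
qed

lemma Omega_strictly_convex_real:
  assumes "q1 \<in> ri_simplex Y" "q2 \<in> ri_simplex Y" "q1 \<noteq> q2" "0 < a" "a < 1"
  shows "real_of_ereal (\<Omega> (\<lambda>v. a * q1 v + (1 - a) * q2 v))
     < a * real_of_ereal (\<Omega> q1) + (1 - a) * real_of_ereal (\<Omega> q2)"
proof -
  have q: "q1 \<in> prob_simplex Y" "q2 \<in> prob_simplex Y" using assms ri_simplex_subset by auto
  have "\<Omega> (\<lambda>v. a * q1 v + (1 - a) * q2 v) < ereal a * \<Omega> q1 + ereal (1 - a) * \<Omega> q2"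
    using legendre assms unfolding legendre_aff_simplex_def by auto
  moreover obtain r1 where "\<Omega> q1 = ereal r1" using Omega_finite[OF q(1)] by blast
  moreover obtain r2 where "\<Omega> q2 = ereal r2" using Omega_finite[OF q(2)] by blast
  moreover obtain r where "\<Omega> (\<lambda>v. a * q1 v + (1 - a) * q2 v) = ereal r"
    using Omega_finite[OF prob_simplex_convex_comb[OF q, of a]] assms(4,5) by fastforce
  ultimately show ?thesis by simp
qed

lemma conj_objective_usc:
  assumes s: "\<forall>n. s n \<in> prob_simplex Y" and l: "l \<in> prob_simplex Y"
    and conv: "\<forall>y\<in>Y. (\<lambda>n. s n y) \<longlonglongrightarrow> l y"
    and a: "a \<longlonglongrightarrow> 0"
    and bound: "eventually (\<lambda>n. M - a n \<le> conj_objective Y \<Omega> \<theta> (s n)) sequentially"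
  shows "M \<le> conj_objective Y \<Omega> \<theta> l"
proof -
  have "real_of_ereal (\<Omega> l) \<le> ipY Y \<theta> l - M + e" if e: "0 < e" for e
  proof -
    have "(\<lambda>n. ipY Y \<theta> (s n) - M + a n) \<longlonglongrightarrow> ipY Y \<theta> l - M + 0"
      using ipY_tendsto[OF conv] a by (intro tendsto_intros) auto
    then have "eventually (\<lambda>n. ipY Y \<theta> (s n) - M + a n < ipY Y \<theta> l - M + e) sequentially"
      using e by (intro order_tendstoD) auto
    with bound have "eventually (\<lambda>n. \<Omega> (s n) \<le> ereal (ipY Y \<theta> l - M + e)) sequentially"
    proof eventually_elim
      case (elim n)
      then have "real_of_ereal (\<Omega> (s n)) \<le> ipY Y \<theta> l - M + e" by (simp add: conj_objective_def)
      then show ?case using Omega_finite[of "s n"] s by (metis ereal_less_eq(3))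
    qed
    then have "liminf (\<lambda>n. \<Omega> (s n)) \<le> ereal (ipY Y \<theta> l - M + e)" by (intro Liminf_le) auto
    moreover have "\<Omega> l \<le> liminf (\<lambda>n. \<Omega> (s n))"
      using lsc l s conv unfolding lsc_Y_def prob_simplex_def by blast
    ultimately show ?thesis using Omega_finite[OF l] by (metis ereal_less_eq(3) order_trans)
  qed
  then have "real_of_ereal (\<Omega> l) \<le> ipY Y \<theta> l - M" by (rule field_le_epsilon)
  then show ?thesis by (simp add: conj_objective_def)
qed

lemma Omega_bounded_below: "\<exists>L. \<forall>q\<in>prob_simplex Y. L \<le> real_of_ereal (\<Omega> q)"
proof (rule ccontr)
  let ?F = "conj_objective Y \<Omega> (\<lambda>_. 0)"
  assume "\<nexists>L. \<forall>q\<in>prob_simplex Y. L \<le> real_of_ereal (\<Omega> q)"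
  have "\<exists>q. q \<in> prob_simplex Y \<and> real n < ?F q" for n :: nat
  proof -
    obtain q where "q \<in> prob_simplex Y" "\<not> - real n \<le> real_of_ereal (\<Omega> q)"
      using \<open>\<nexists>L. _\<close> by blast
    then show ?thesis by (auto simp: conj_objective_def ipY_def)
  qed
  then obtain s where s: "\<forall>n. s n \<in> prob_simplex Y" and big: "\<forall>n. real n < ?F (s n)"
    by metis
  obtain r l where r: "strict_mono r" and l: "l \<in> prob_simplex Y"
    and conv: "\<forall>y\<in>Y. (\<lambda>n. s (r n) y) \<longlonglongrightarrow> l y"
    using prob_simplex_subseq[OF finite_Y s] by blast
  have "?F l + 1 \<le> ?F l"
  proof (rule conj_objective_usc[where a = "\<lambda>_. 0"])
    show "eventually (\<lambda>n. ?F l + 1 - 0 \<le> ?F (s (r n))) sequentially"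
    proof (rule eventually_sequentiallyI)
      fix n assume "nat \<lceil>?F l + 1\<rceil> \<le> n"
      moreover have "n \<le> r n" using r by (simp add: seq_suble)
      ultimately have "real (nat \<lceil>?F l + 1\<rceil>) \<le> real (r n)" by simp
      then show "?F l + 1 - 0 \<le> ?F (s (r n))"
        using big[rule_format, of "r n"] real_nat_ceiling_ge[of "?F l + 1"] by linarith
    qed
  qed (use s l conv in auto)
  then show False by simp
qed

lemma conj_objective_bdd_above: "bdd_above (conj_objective Y \<Omega> \<theta> ` prob_simplex Y)"
proof -
  obtain L where L: "\<forall>q\<in>prob_simplex Y. L \<le> real_of_ereal (\<Omega> q)"
    using Omega_bounded_below by blast
  have "conj_objective Y \<Omega> \<theta> q \<le> (\<Sum>y\<in>Y. \<bar>\<theta> y\<bar>) - L" if q: "q \<in> prob_simplex Y" for q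
  proof -
    have "\<theta> y * q y \<le> \<bar>\<theta> y\<bar>" if "y \<in> Y" for y
    proof -
      have "0 \<le> q y" "q y \<le> 1" using prob_simplex_coord_bounds[OF finite_Y q that] by auto
      then have "\<theta> y * q y \<le> \<bar>\<theta> y\<bar> * q y" by (intro mult_right_mono) auto
      also have "\<dots> \<le> \<bar>\<theta> y\<bar>" using \<open>q y \<le> 1\<close> by (simp add: mult_left_le)
      finally show ?thesis .
    qed
    then have "ipY Y \<theta> q \<le> (\<Sum>y\<in>Y. \<bar>\<theta> y\<bar>)" unfolding ipY_def by (rule sum_mono)
    then show ?thesis using L q by (auto simp: conj_objective_def)
  qed
  then show ?thesis by (intro bdd_aboveI) blast
qed

lemma conj_objective_limit_point:
  fixes s :: "nat \<Rightarrow> dvec"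
  assumes s: "\<forall>n. s n \<in> prob_simplex Y" and a: "a \<longlonglongrightarrow> 0"
    and near: "\<forall>n. M - a n \<le> conj_objective Y \<Omega> \<theta> (s n)"
  shows "\<exists>r l. strict_mono r \<and> l \<in> prob_simplex Y \<and> (\<forall>y\<in>Y. (\<lambda>n. s (r n) y) \<longlonglongrightarrow> l y)
               \<and> M \<le> conj_objective Y \<Omega> \<theta> l"
proof -
  obtain r l where r: "strict_mono r" and l: "l \<in> prob_simplex Y"
    and conv: "\<forall>y\<in>Y. (\<lambda>n. s (r n) y) \<longlonglongrightarrow> l y"
    using prob_simplex_subseq[OF finite_Y s] by blast
  have "M \<le> conj_objective Y \<Omega> \<theta> l"
  proof (rule conj_objective_usc[where a = "a \<circ> r"])
    show "(a \<circ> r) \<longlonglongrightarrow> 0" using LIMSEQ_subseq_LIMSEQ[OF a r] .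
    show "eventually (\<lambda>n. M - (a \<circ> r) n \<le> conj_objective Y \<Omega> \<theta> (s (r n))) sequentially"
      using near by (simp add: comp_def)
  qed (use s l conv in auto)
  then show ?thesis using r l conv by blast
qed

lemma conj_maximizer_exists: "\<exists>q. conj_maximizer Y \<Omega> \<theta> q"
proof -
  let ?F = "conj_objective Y \<Omega> \<theta>"
  have ne: "?F ` prob_simplex Y \<noteq> {}"
    using proper_convex unfolding proper_convex_dom_simplex_def by blast
  define S where "S = Sup (?F ` prob_simplex Y)"
  have "\<exists>q. q \<in> prob_simplex Y \<and> S - inverse (real (Suc n)) < ?F q" for n
  proof -
    have "S - inverse (real (Suc n)) < S" by simp
    then show ?thesis unfolding S_def using less_cSup_iff[OF ne conj_objective_bdd_above] by blast
  qed
  then obtain s where s: "\<forall>n. s n \<in> prob_simplex Y"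
    and near: "\<forall>n. S - inverse (real (Suc n)) < ?F (s n)"
    by metis
  obtain l where l: "l \<in> prob_simplex Y" and "S \<le> ?F l"
    using conj_objective_limit_point[OF s LIMSEQ_inverse_real_of_nat] near less_imp_le by blast
  moreover have "\<forall>p\<in>prob_simplex Y. ?F p \<le> S"
    unfolding S_def using conj_objective_bdd_above by (auto intro: cSup_upper)
  ultimately show ?thesis unfolding conj_maximizer_def by force
qed

lemma grad_le_Omega_diff:
  assumes q: "q \<in> prob_simplex Y"
    and G: "has_grad_along Y (tangent Y) (\<lambda>p. real_of_ereal (\<Omega> p)) q G"
    and z: "z \<in> prob_simplex Y"
  shows "ipY Y G (\<lambda>v. z v - q v) \<le> real_of_ereal (\<Omega> z) - real_of_ereal (\<Omega> q)"
proof -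
  define f where "f = (\<lambda>p. real_of_ereal (\<Omega> p))"
  define w where "w = (\<lambda>v. z v - q v)"
  define D where "D = nrmY Y w"
  have D0: "0 \<le> D" by (simp add: D_def nrmY_nonneg)
  have approx: "ipY Y G w \<le> f z - f q + e * D" if e: "e > 0" for e
  proof -
    obtain \<delta> where \<delta>: "\<delta> > 0" and H: "\<forall>h\<in>tangent Y. nrmY Y h < \<delta> \<longrightarrow>
        \<bar>f (\<lambda>v. q v + h v) - f q - ipY Y G h\<bar> \<le> e * nrmY Y h"
      using G e unfolding has_grad_along_def f_def by blast
    define t where "t = min 1 (\<delta> / (2 * (D + 1)))"
    have t: "0 < t" "t \<le> 1" using \<delta> D0 by (auto simp: t_def)
    have "t * D \<le> \<delta> / (2 * (D + 1)) * D" using D0 by (intro mult_right_mono) (auto simp: t_def)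
    also have "\<dots> = \<delta> * (D / (2 * (D + 1)))" by simp
    also have "\<dots> < \<delta> * 1"
      using \<delta> D0 by (intro mult_strict_left_mono) (simp_all add: divide_less_eq)
    finally have small: "t * D < \<delta>" by simp
    define h where "h = (\<lambda>v. t * w v)"
    have "h \<in> tangent Y"
      using z q by (auto simp: tangent_def RY_def prob_simplex_def h_def w_def
          sum_distrib_left[symmetric] sum_subtractf)
    moreover have nrm_h: "nrmY Y h = t * D" using t by (simp add: h_def D_def nrmY_scale)
    ultimately have "\<bar>f (\<lambda>v. q v + h v) - f q - ipY Y G h\<bar> \<le> e * (t * D)"
      using H small by auto
    moreover have "(\<lambda>v. q v + h v) = (\<lambda>v. t * z v + (1 - t) * q v)"
      by (auto simp: h_def w_def algebra_simps)
    moreover have "f (\<lambda>v. t * z v + (1 - t) * q v) \<le> t * f z + (1 - t) * f q"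
      unfolding f_def using Omega_convex_real[OF z q] t by simp
    ultimately have "t * ipY Y G w \<le> t * (f z - f q + e * D)"
      by (simp add: h_def ipY_scale_right algebra_simps abs_le_iff)
    then show ?thesis using t by simp
  qed
  from le_of_forall_le_plus_mult[OF approx D0] show ?thesis unfolding f_def w_def .
qed

lemma conj_maximizer_segment:
  assumes q0: "conj_maximizer Y \<Omega> \<theta> q0" and p: "p \<in> prob_simplex Y" and l: "0 \<le> l" "l \<le> 1"
  shows "l * ipY Y \<theta> (\<lambda>v. p v - q0 v)
    \<le> real_of_ereal (\<Omega> (\<lambda>v. l * p v + (1 - l) * q0 v)) - real_of_ereal (\<Omega> q0)"
proof -
  let ?q = "\<lambda>v. l * p v + (1 - l) * q0 v"
  have "?q \<in> prob_simplex Y"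
    using prob_simplex_convex_comb[OF p _ l] q0 by (simp add: conj_maximizer_def)
  then have "conj_objective Y \<Omega> \<theta> ?q \<le> conj_objective Y \<Omega> \<theta> q0"
    using q0 unfolding conj_maximizer_def by blast
  moreover have "(\<lambda>v. ?q v - q0 v) = (\<lambda>v. l * (p v - q0 v))" by (auto simp: algebra_simps)
  then have "ipY Y \<theta> ?q - ipY Y \<theta> q0 = l * ipY Y \<theta> (\<lambda>v. p v - q0 v)"
    by (simp add: ipY_scale_right flip: ipY_diff_right)
  ultimately show ?thesis by (simp add: conj_objective_def)
qed

lemma grad_diff_bound:
  assumes q0: "conj_maximizer Y \<Omega> \<theta> q0" and p: "p \<in> ri_simplex Y" and l: "0 < l" "l \<le> 1"
    and G: "has_grad_along Y (tangent Y) (\<lambda>p. real_of_ereal (\<Omega> p)) (\<lambda>v. l * p v + (1 - l) * q0 v) G"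
    and ab: "a \<in> Y" "b \<in> Y" "a \<noteq> b"
  shows "G a - G b \<le> (real_of_ereal (\<Omega> (move_mass p b a)) - real_of_ereal (\<Omega> q0)
                        - ipY Y \<theta> (\<lambda>v. p v - q0 v)) / p b"
proof -
  define f where "f = (\<lambda>p. real_of_ereal (\<Omega> p))"
  define q where "q = (\<lambda>v. l * p v + (1 - l) * q0 v)"
  define c where "c = ipY Y \<theta> (\<lambda>v. p v - q0 v)"
  define Gp where "Gp = ipY Y G (\<lambda>v. p v - q0 v)"
  have q0s: "q0 \<in> prob_simplex Y" using q0 by (simp add: conj_maximizer_def)
  have ps: "p \<in> prob_simplex Y" using p ri_simplex_subset by auto
  have qs: "q \<in> prob_simplex Y" unfolding q_def using prob_simplex_convex_comb[OF ps q0s] l by simp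
  have "(\<lambda>v. q0 v - q v) = (\<lambda>v. (- l) * (p v - q0 v))" by (auto simp: q_def algebra_simps)
  then have "ipY Y G (\<lambda>v. q0 v - q v) = - l * Gp"
    using ipY_scale_right[of Y G "-l" "\<lambda>v. p v - q0 v"] by (simp add: Gp_def)
  then have "- l * Gp \<le> f q0 - f q"
    using grad_le_Omega_diff[OF qs G[folded q_def] q0s] by (simp add: f_def)
  moreover have segment: "l * c \<le> f q - f q0"
    using conj_maximizer_segment[OF q0 ps] l by (simp add: f_def q_def c_def)
  ultimately have "l * c \<le> l * Gp" by (simp add: algebra_simps)
  with l have c_le: "c \<le> Gp" by simp
  have "(\<lambda>v. move_mass p b a v - q v)
      = (\<lambda>v. (1 - l) * (p v - q0 v) + p b * ((if v = a then 1 else 0) - (if v = b then 1 else 0)))"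
    by (auto simp: move_mass_def q_def algebra_simps)
  then have "(1 - l) * Gp + p b * (G a - G b) \<le> f (move_mass p b a) - f q"
    using grad_le_Omega_diff[OF qs G[folded q_def] move_mass_in_prob_simplex[OF finite_Y ps ab]]
      ab finite_Y
    by (simp add: f_def Gp_def ipY_add_right ipY_scale_right ipY_diff_right ipY_indicator)
  moreover have "(1 - l) * c \<le> (1 - l) * Gp" using c_le l by (intro mult_left_mono) auto
  ultimately have "p b * (G a - G b) \<le> f (move_mass p b a) - f q0 - c"
    using segment by (simp add: algebra_simps)
  moreover have "0 < p b" using p ab by (auto simp: ri_simplex_def)
  ultimately show ?thesis by (simp add: f_def c_def pos_le_divide_eq mult.commute)
qed

text \<open>Along the segment from an interior point to a boundary maximiser the gradient differences
  are bounded uniformly by \<open>grad_diff_bound\<close>, whereas essential smoothness makes them blow up.\<close>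

lemma conj_maximizer_in_ri:
  assumes q0: "conj_maximizer Y \<Omega> \<theta> q0"
  shows "q0 \<in> ri_simplex Y"
proof (rule ccontr)
  assume q0_bd: "q0 \<notin> ri_simplex Y"
  have q0s: "q0 \<in> prob_simplex Y" using q0 by (simp add: conj_maximizer_def)
  have "ri_simplex Y \<noteq> {}" using legendre unfolding legendre_aff_simplex_def by blast
  then obtain p where p: "p \<in> ri_simplex Y" by blast
  define lam where "lam = (\<lambda>n::nat. inverse (real (Suc n)))"
  have lam: "0 < lam n" "lam n \<le> 1" for n by (auto simp: lam_def field_simps)
  define s where "s = (\<lambda>n v. lam n * p v + (1 - lam n) * q0 v)"
  have s_ri: "\<forall>n. s n \<in> ri_simplex Y" unfolding s_def using ri_simplex_convex_comb[OF p q0s lam] by blast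
  have "\<forall>y\<in>Y. (\<lambda>n. s n y) \<longlonglongrightarrow> q0 y"
  proof
    fix y
    have "(\<lambda>n. lam n * p y + (1 - lam n) * q0 y) \<longlonglongrightarrow> 0 * p y + (1 - 0) * q0 y"
      unfolding lam_def by (intro tendsto_intros LIMSEQ_inverse_real_of_nat)
    then show "(\<lambda>n. s n y) \<longlonglongrightarrow> q0 y" by (simp add: s_def)
  qed
  moreover have "\<forall>q\<in>ri_simplex Y. \<exists>G. has_grad_along Y (tangent Y) (\<lambda>p. real_of_ereal (\<Omega> p)) q G"
    using legendre unfolding legendre_aff_simplex_def by blast
  then have "\<exists>G. has_grad_along Y (tangent Y) (\<lambda>p. real_of_ereal (\<Omega> p)) (s n) G" for n
    using s_ri by blast
  then obtain g where g: "\<forall>n. has_grad_along Y (tangent Y) (\<lambda>p. real_of_ereal (\<Omega> p)) (s n) (g n)"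
    by metis
  ultimately have blowup: "filterlim (\<lambda>n. nrmY Y (g n)) at_top sequentially"
    using legendre s_ri q0s q0_bd unfolding legendre_aff_simplex_def by blast
  define K where "K = (\<lambda>a b. if a = b then 0 else
     (real_of_ereal (\<Omega> (move_mass p b a)) - real_of_ereal (\<Omega> q0) - ipY Y \<theta> (\<lambda>v. p v - q0 v)) / p b)"
  have "nrmY Y (g n) \<le> real (card Y) * (\<Sum>a\<in>Y. \<Sum>b\<in>Y. \<bar>K a b\<bar>)" for n
  proof (rule tangent_nrmY_bound[OF finite_Y])
    show "g n \<in> tangent Y" using g unfolding has_grad_along_def by blast
    show "\<forall>a\<in>Y. \<forall>b\<in>Y. g n a - g n b \<le> K a b"
      using grad_diff_bound[OF q0 p lam g[rule_format, of n, unfolded s_def]] by (auto simp: K_def)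
  qed
  moreover have "eventually (\<lambda>n. real (card Y) * (\<Sum>a\<in>Y. \<Sum>b\<in>Y. \<bar>K a b\<bar>) < nrmY Y (g n)) sequentially"
    using blowup by (simp add: filterlim_at_top_dense)
  then obtain n where "real (card Y) * (\<Sum>a\<in>Y. \<Sum>b\<in>Y. \<bar>K a b\<bar>) < nrmY Y (g n)"
    by (auto simp: eventually_sequentially)
  ultimately show False by (simp add: not_le[symmetric])
qed

lemma conj_maximizer_unique:
  assumes q1: "conj_maximizer Y \<Omega> \<theta> q1" and q2: "conj_maximizer Y \<Omega> \<theta> q2"
  shows "q1 = q2"
proof (rule ccontr)
  assume ne: "q1 \<noteq> q2"
  let ?F = "conj_objective Y \<Omega> \<theta>"
  define m where "m = (\<lambda>v. (1/2) * q1 v + (1 - 1/2) * q2 v)"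
  have q: "q1 \<in> prob_simplex Y" "q2 \<in> prob_simplex Y" using q1 q2 by (auto simp: conj_maximizer_def)
  have "m \<in> prob_simplex Y" unfolding m_def by (rule prob_simplex_convex_comb[OF q]) auto
  then have "?F m \<le> ?F q1" using q1 by (simp add: conj_maximizer_def)
  moreover have "?F q1 = ?F q2" using q1 q2 q by (simp add: conj_maximizer_def order_antisym)
  moreover have "real_of_ereal (\<Omega> m) < (1/2) * real_of_ereal (\<Omega> q1) + (1 - 1/2) * real_of_ereal (\<Omega> q2)"
    unfolding m_def
    using Omega_strictly_convex_real[OF conj_maximizer_in_ri[OF q1] conj_maximizer_in_ri[OF q2] ne,
        of "1/2"]
    by simp
  moreover have "ipY Y \<theta> m = (1/2) * ipY Y \<theta> q1 + (1 - 1/2) * ipY Y \<theta> q2"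
    unfolding m_def by (simp only: ipY_add_right ipY_scale_right)
  ultimately show False by (simp add: conj_objective_def)
qed

lemma conjY_eq:
  assumes q: "conj_maximizer Y \<Omega> \<theta> q"
  shows "conjY Y \<Omega> \<theta> = ereal (conj_objective Y \<Omega> \<theta> q)"
proof -
  have obj_value: "ereal (ipY Y \<theta> p) - \<Omega> p = ereal (conj_objective Y \<Omega> \<theta> p)" if "p \<in> prob_simplex Y" for p
    using Omega_finite[OF that] by (cases "\<Omega> p") (auto simp: conj_objective_def)
  have "ereal (ipY Y \<theta> p) - \<Omega> p \<le> ereal (conj_objective Y \<Omega> \<theta> q)" for p
    using q obj_value Omega_outside[of p] by (cases "p \<in> prob_simplex Y") (auto simp: conj_maximizer_def)
  moreover have "q \<in> RY Y" using q prob_simplex_subset_RY by (auto simp: conj_maximizer_def)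
  ultimately show ?thesis
    unfolding conjY_def using q obj_value
    by (intro antisym SUP_least SUP_upper2[of q]) (auto simp: conj_maximizer_def)
qed

lemma conjY_finite: "conjY Y \<Omega> \<theta> = ereal (real_of_ereal (conjY Y \<Omega> \<theta>))"
  using conj_maximizer_exists[of \<theta>] conjY_eq by force

lemma conj_maximizer_stable:
  assumes qs: "conj_maximizer Y \<Omega> \<theta> qs" and e: "0 < e"
  shows "\<exists>\<delta>>0. \<forall>h q. nrmY Y h < \<delta> \<longrightarrow> conj_maximizer Y \<Omega> (\<lambda>v. \<theta> v + h v) q
                 \<longrightarrow> nrmY Y (\<lambda>v. q v - qs v) < e"
proof (rule ccontr)
  let ?F = "conj_objective Y \<Omega> \<theta>"
  assume "\<not> ?thesis"
  then have "\<forall>\<delta>. \<delta> \<le> 0 \<or> (\<exists>h q. nrmY Y h < \<delta> \<and>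
      conj_maximizer Y \<Omega> (\<lambda>v. \<theta> v + h v) q \<and> e \<le> nrmY Y (\<lambda>v. q v - qs v))"
    by (simp add: not_less)
  then have "\<forall>n::nat. \<exists>h q. nrmY Y h < inverse (real (Suc n)) \<and>
      conj_maximizer Y \<Omega> (\<lambda>v. \<theta> v + h v) q \<and> e \<le> nrmY Y (\<lambda>v. q v - qs v)"
    by (metis inverse_positive_iff_positive of_nat_0_less_iff zero_less_Suc not_le)
  then obtain h qn where h: "\<forall>n. nrmY Y (h n) < inverse (real (Suc n))"
    and qn: "\<forall>n. conj_maximizer Y \<Omega> (\<lambda>v. \<theta> v + h n v) (qn n)"
    and far: "\<forall>n. e \<le> nrmY Y (\<lambda>v. qn n v - qs v)"
    by metis
  have qs_in: "qs \<in> prob_simplex Y" and qn_in: "\<forall>n. qn n \<in> prob_simplex Y"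
    using qs qn by (auto simp: conj_maximizer_def)
  have "?F qs - 2 * inverse (real (Suc n)) \<le> ?F (qn n)" for n
    using conj_maximizer_perturb[OF qn[rule_format, of n] qs_in] h[rule_format, of n] by linarith
  moreover have "(\<lambda>n. 2 * inverse (real (Suc n))) \<longlonglongrightarrow> 0"
    using tendsto_mult_right_zero[OF LIMSEQ_inverse_real_of_nat] .
  ultimately obtain r l where r: "strict_mono r" and l: "l \<in> prob_simplex Y"
    and conv: "\<forall>y\<in>Y. (\<lambda>n. qn (r n) y) \<longlonglongrightarrow> l y" and "?F qs \<le> ?F l"
    using conj_objective_limit_point[OF qn_in] by blast
  then have "conj_maximizer Y \<Omega> \<theta> l" using qs l by (auto simp: conj_maximizer_def)
  then have "l = qs" using conj_maximizer_unique[OF _ qs] by blast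
  then have "(\<lambda>n. nrmY Y (\<lambda>v. qn (r n) v - qs v)) \<longlonglongrightarrow> 0"
    using nrmY_diff_tendsto_0[OF conv] by simp
  then have "eventually (\<lambda>n. nrmY Y (\<lambda>v. qn (r n) v - qs v) < e) sequentially"
    using e by (intro order_tendstoD) auto
  then obtain n where "nrmY Y (\<lambda>v. qn (r n) v - qs v) < e" by (auto simp: eventually_sequentially)
  then show False using far by (simp add: not_le[symmetric])
qed

text \<open>Danskin: \<open>0 \<le> \<Omega>\<^sup>*(\<theta> + h) - \<Omega>\<^sup>*(\<theta>) - \<langle>h, q\<rangle> \<le> \<langle>h, q\<^sub>h - q\<rangle>\<close> for the maximisers
  \<open>q\<close>, \<open>q\<^sub>h\<close> at \<open>\<theta>\<close>, \<open>\<theta> + h\<close>, and \<open>q\<^sub>h \<rightarrow> q\<close>.\<close>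

lemma conjY_has_grad:
  assumes q: "conj_maximizer Y \<Omega> \<theta> q"
  shows "has_grad_along Y (RY Y) (\<lambda>\<theta>. real_of_ereal (conjY Y \<Omega> \<theta>)) \<theta> q"
  unfolding has_grad_along_def
proof (intro conjI allI impI)
  show "q \<in> RY Y" using q prob_simplex_subset_RY by (auto simp: conj_maximizer_def)
  fix e :: real assume "0 < e"
  then obtain \<delta> where \<delta>: "0 < \<delta>" and stable: "\<forall>h q'. nrmY Y h < \<delta> \<longrightarrow>
      conj_maximizer Y \<Omega> (\<lambda>v. \<theta> v + h v) q' \<longrightarrow> nrmY Y (\<lambda>v. q' v - q v) < e"
    using conj_maximizer_stable[OF q] by blast
  have "\<bar>real_of_ereal (conjY Y \<Omega> (\<lambda>v. \<theta> v + h v)) - real_of_ereal (conjY Y \<Omega> \<theta>) - ipY Y q h\<bar>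
      \<le> e * nrmY Y h" if h: "nrmY Y h < \<delta>" for h
  proof -
    obtain qh where qh: "conj_maximizer Y \<Omega> (\<lambda>v. \<theta> v + h v) qh"
      using conj_maximizer_exists by blast
    let ?D = "real_of_ereal (conjY Y \<Omega> (\<lambda>v. \<theta> v + h v)) - real_of_ereal (conjY Y \<Omega> \<theta>) - ipY Y q h"
    have D: "?D = conj_objective Y \<Omega> \<theta> qh + ipY Y h qh - conj_objective Y \<Omega> \<theta> q - ipY Y h q"
      by (simp add: conjY_eq[OF q] conjY_eq[OF qh] conj_objective_shift ipY_commute)
    have "conj_objective Y \<Omega> \<theta> q + ipY Y h q \<le> conj_objective Y \<Omega> \<theta> qh + ipY Y h qh"
      using qh q unfolding conj_maximizer_def conj_objective_shift by blast
    moreover have "conj_objective Y \<Omega> \<theta> qh \<le> conj_objective Y \<Omega> \<theta> q"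
      using qh q unfolding conj_maximizer_def by blast
    moreover have "ipY Y h (\<lambda>v. qh v - q v) \<le> nrmY Y h * nrmY Y (\<lambda>v. qh v - q v)"
      using abs_ipY_le[of Y h] by (simp add: abs_le_iff)
    moreover have "nrmY Y h * nrmY Y (\<lambda>v. qh v - q v) \<le> nrmY Y h * e"
      using stable h qh by (intro mult_left_mono) (auto simp: nrmY_nonneg less_imp_le)
    ultimately show ?thesis using D by (simp add: ipY_diff_right mult.commute)
  qed
  then show "\<exists>\<delta>>0. \<forall>h\<in>RY Y. nrmY Y h < \<delta> \<longrightarrow>
      \<bar>real_of_ereal (conjY Y \<Omega> (\<lambda>v. \<theta> v + h v)) - real_of_ereal (conjY Y \<Omega> \<theta>) - ipY Y q h\<bar>
      \<le> e * nrmY Y h"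
    using \<delta> by (intro exI[of _ \<delta>]) simp
qed

lemma Sloss_eq_conj_objective:
  assumes p: "p \<in> prob_simplex Y" and \<kappa>: "0 < \<kappa>"
  shows "Sloss Y \<Omega> \<kappa> \<gamma> s p
    = ereal (\<kappa> * real_of_ereal (conjY Y \<Omega> s) - \<kappa> * conj_objective Y \<Omega> (\<lambda>y. s y - \<gamma> y / \<kappa>) p)"
proof -
  obtain r where r: "\<Omega> p = ereal r" using Omega_finite[OF p] by blast
  obtain C where C: "conjY Y \<Omega> s = ereal C" using conjY_finite by blast
  have "Sloss Y \<Omega> \<kappa> \<gamma> s p = ereal (ipY Y \<gamma> p + \<kappa> * (r + C - ipY Y s p))"
    unfolding Sloss_def fyY_def r C by simp
  also have "ipY Y \<gamma> p + \<kappa> * (r + C - ipY Y s p) = \<kappa> * C - \<kappa> * (ipY Y s p - ipY Y \<gamma> p / \<kappa> - r)"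
    using \<kappa> by (simp add: field_simps)
  also have "ipY Y s p - ipY Y \<gamma> p / \<kappa> = ipY Y (\<lambda>y. s y - \<gamma> y / \<kappa>) p"
    unfolding ipY_def by (simp add: left_diff_distrib sum_subtractf sum_divide_distrib)
  finally show ?thesis by (simp add: conj_objective_def r C)
qed

lemma Sloss_argmin:
  assumes \<kappa>: "0 < \<kappa>" and q: "q \<in> prob_simplex Y"
    and q_min: "\<forall>p\<in>prob_simplex Y. Sloss Y \<Omega> \<kappa> \<gamma> s q \<le> Sloss Y \<Omega> \<kappa> \<gamma> s p"
  shows "{p \<in> prob_simplex Y. \<forall>p'\<in>prob_simplex Y. Sloss Y \<Omega> \<kappa> \<gamma> s p \<le> Sloss Y \<Omega> \<kappa> \<gamma> s p'} = {q}"
    and "has_grad_along Y (RY Y) (\<lambda>\<theta>. real_of_ereal (conjY Y \<Omega> \<theta>)) (\<lambda>y. s y - \<gamma> y / \<kappa>) q"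
proof -
  let ?\<theta> = "\<lambda>y. s y - \<gamma> y / \<kappa>"
  have Sloss_le_iff: "Sloss Y \<Omega> \<kappa> \<gamma> s p \<le> Sloss Y \<Omega> \<kappa> \<gamma> s p'
      \<longleftrightarrow> conj_objective Y \<Omega> ?\<theta> p' \<le> conj_objective Y \<Omega> ?\<theta> p"
    if "p \<in> prob_simplex Y" "p' \<in> prob_simplex Y" for p p'
    using \<kappa> by (simp add: Sloss_eq_conj_objective[OF that(1) \<kappa>] Sloss_eq_conj_objective[OF that(2) \<kappa>])
  have argmin_iff: "(p \<in> prob_simplex Y \<and> (\<forall>p'\<in>prob_simplex Y. Sloss Y \<Omega> \<kappa> \<gamma> s p \<le> Sloss Y \<Omega> \<kappa> \<gamma> s p'))
      \<longleftrightarrow> conj_maximizer Y \<Omega> ?\<theta> p" for p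
    unfolding conj_maximizer_def using Sloss_le_iff by blast
  then have "conj_maximizer Y \<Omega> ?\<theta> q" using q q_min by blast
  then show "{p \<in> prob_simplex Y. \<forall>p'\<in>prob_simplex Y. Sloss Y \<Omega> \<kappa> \<gamma> s p \<le> Sloss Y \<Omega> \<kappa> \<gamma> s p'} = {q}"
    and "has_grad_along Y (RY Y) (\<lambda>\<theta>. real_of_ereal (conjY Y \<Omega> \<theta>)) ?\<theta> q"
    using argmin_iff conj_maximizer_unique conjY_has_grad by blast+
qed

lemma OmegaC_ge:
  assumes q: "conj_maximizer Y \<Omega> (YmatT d Y \<phi>) q"
  shows "ereal (ipd d \<phi> \<mu> - conj_objective Y \<Omega> (YmatT d Y \<phi>) q) \<le> OmegaC Y \<Omega> \<mu>"
  unfolding OmegaC_def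
proof (rule INF_greatest)
  fix p assume "p \<in> {p \<in> prob_simplex Y. Ymat Y p = \<mu>}"
  then have p: "p \<in> prob_simplex Y" and \<mu>: "\<mu> = Ymat Y p" by auto
  have "conj_objective Y \<Omega> (YmatT d Y \<phi>) p \<le> conj_objective Y \<Omega> (YmatT d Y \<phi>) q"
    using q p by (simp add: conj_maximizer_def)
  then have "ipd d \<phi> \<mu> - conj_objective Y \<Omega> (YmatT d Y \<phi>) q \<le> real_of_ereal (\<Omega> p)"
    by (simp add: \<mu> ipd_Ymat conj_objective_def)
  then show "ereal (ipd d \<phi> \<mu> - conj_objective Y \<Omega> (YmatT d Y \<phi>) q) \<le> \<Omega> p"
    using Omega_finite[OF p] by (metis ereal_less_eq(3))
qed

lemma conjd_OmegaC:
  assumes Yd: "Y \<subseteq> Rd d"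
  shows "conjd d (OmegaC Y \<Omega>) \<phi> = conjY Y \<Omega> (YmatT d Y \<phi>)"
proof -
  obtain q where q: "conj_maximizer Y \<Omega> (YmatT d Y \<phi>) q" using conj_maximizer_exists by blast
  define M where "M = conj_objective Y \<Omega> (YmatT d Y \<phi>) q"
  have "ereal (ipd d \<phi> \<mu>) - OmegaC Y \<Omega> \<mu> \<le> ereal M" for \<mu>
    using OmegaC_ge[OF q, of \<mu>] by (cases "OmegaC Y \<Omega> \<mu>") (auto simp: M_def)
  moreover have "ereal M \<le> ereal (ipd d \<phi> (Ymat Y q)) - OmegaC Y \<Omega> (Ymat Y q)"
  proof -
    have qs: "q \<in> prob_simplex Y" using q by (simp add: conj_maximizer_def)
    have "OmegaC Y \<Omega> (Ymat Y q) \<le> \<Omega> q" unfolding OmegaC_def using qs by (intro INF_lower) auto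
    then have "ereal (ipd d \<phi> (Ymat Y q)) - \<Omega> q \<le> ereal (ipd d \<phi> (Ymat Y q)) - OmegaC Y \<Omega> (Ymat Y q)"
      by (intro ereal_minus_mono) auto
    moreover have "ereal (ipd d \<phi> (Ymat Y q)) - \<Omega> q = ereal M"
      using Omega_finite[OF qs] by (cases "\<Omega> q") (auto simp: M_def conj_objective_def ipd_Ymat)
    ultimately show ?thesis by simp
  qed
  ultimately have "conjd d (OmegaC Y \<Omega>) \<phi> = ereal M"
    unfolding conjd_def using Ymat_in_Rd[OF Yd]
    by (intro antisym SUP_least SUP_upper2[of "Ymat Y q"]) auto
  then show ?thesis using conjY_eq[OF q] by (simp add: M_def)
qed

lemma OmegaC_Ymat_finite:
  assumes p: "p \<in> prob_simplex Y"
  shows "OmegaC Y \<Omega> (Ymat Y p) = ereal (real_of_ereal (OmegaC Y \<Omega> (Ymat Y p)))"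
proof -
  obtain L where L: "\<forall>q\<in>prob_simplex Y. L \<le> real_of_ereal (\<Omega> q)" using Omega_bounded_below by blast
  have "ereal L \<le> OmegaC Y \<Omega> (Ymat Y p)"
    unfolding OmegaC_def using L Omega_finite by (intro INF_greatest) (metis (mono_tags) ereal_less_eq(3) mem_Collect_eq)
  moreover have "OmegaC Y \<Omega> (Ymat Y p) \<le> \<Omega> p" unfolding OmegaC_def using p by (intro INF_lower) auto
  ultimately show ?thesis using Omega_finite[OF p] by (cases "OmegaC Y \<Omega> (Ymat Y p)") auto
qed

lemma fyd_OmegaC_Ymat:
  assumes Yd: "Y \<subseteq> Rd d" and p: "p \<in> prob_simplex Y"
  shows "fyd d (OmegaC Y \<Omega>) \<phi> (Ymat Y p) = ereal (real_of_ereal (OmegaC Y \<Omega> (Ymat Y p))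
      + real_of_ereal (conjY Y \<Omega> (YmatT d Y \<phi>)) - ipY Y (YmatT d Y \<phi>) p)"
  unfolding fyd_def conjd_OmegaC[OF Yd] ipd_Ymat
  by (subst OmegaC_Ymat_finite[OF p], subst conjY_finite) simp

lemma Sloss_scores_eq_fyd:
  assumes Yd: "Y \<subseteq> Rd d" and p: "p \<in> prob_simplex Y"
  shows "Sloss Y \<Omega> \<kappa> \<gamma> (YmatT d Y \<phi>) p
    = ereal (ipY Y \<gamma> p + \<kappa> * (real_of_ereal (\<Omega> p) - real_of_ereal (OmegaC Y \<Omega> (Ymat Y p)))
             + \<kappa> * real_of_ereal (fyd d (OmegaC Y \<Omega>) \<phi> (Ymat Y p)))"
proof -
  obtain r where r: "\<Omega> p = ereal r" using Omega_finite[OF p] by blast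
  obtain C where C: "conjY Y \<Omega> (YmatT d Y \<phi>) = ereal C" using conjY_finite by blast
  show ?thesis
    unfolding Sloss_def fyY_def fyd_OmegaC_Ymat[OF Yd p] r C by (simp add: algebra_simps)
qed

end

section \<open>The alternating scheme\<close>

lemma separable_sum_le_update:
  fixes V :: "nat \<Rightarrow> 'a \<Rightarrow> real"
  assumes "i < N" "(\<Sum>j<N. V j (Q j)) \<le> (\<Sum>j<N. V j ((Q(i := p)) j))"
  shows "V i (Q i) \<le> V i p"
proof -
  have "(\<Sum>j<N. V j ((Q(i := p)) j)) = V i p + (\<Sum>j\<in>{..<N} - {i}. V j (Q j))"
    using assms(1) by (simp add: sum.remove)
  moreover have "(\<Sum>j<N. V j (Q j)) = V i (Q i) + (\<Sum>j\<in>{..<N} - {i}. V j (Q j))"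
    using assms(1) by (simp add: sum.remove)
  ultimately show ?thesis using assms(2) by simp
qed

lemma SN_eq_mean:
  assumes "\<forall>j<N. Sloss (Ys (x j)) (\<Omega> (x j)) \<kappa> (gam Ys c (x j) (\<xi> j)) (s j) (Q j) = ereal (V j)"
  shows "SN N Ys \<Omega> \<kappa> c x \<xi> s Q = ereal (1 / real N * (\<Sum>j<N. V j))"
proof -
  have "(\<Sum>j<N. Sloss (Ys (x j)) (\<Omega> (x j)) \<kappa> (gam Ys c (x j) (\<xi> j)) (s j) (Q j)) = (\<Sum>j<N. ereal (V j))"
    using assms by (intro sum.cong) auto
  then show ?thesis unfolding SN_def by (simp add: sum_ereal)
qed

context
  fixes N :: nat and Ys :: "'x \<Rightarrow> vec set" and \<Omega> :: "'x \<Rightarrow> dvec \<Rightarrow> ereal" and x :: "nat \<Rightarrow> 'x"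
    and \<kappa> :: real
  assumes N: "0 < N" and \<kappa>: "0 < \<kappa>"
    and regularizers: "\<forall>i<N. simplex_regularizer (Ys (x i)) (\<Omega> (x i))"
begin

lemma SN_argmin_samplewise:
  assumes Q: "Q \<in> prod_simplex N Ys x"
    and Q_min: "\<forall>Q'\<in>prod_simplex N Ys x. SN N Ys \<Omega> \<kappa> c x \<xi> s Q \<le> SN N Ys \<Omega> \<kappa> c x \<xi> s Q'"
  shows "\<forall>i<N. {p \<in> prob_simplex (Ys (x i)). \<forall>p'\<in>prob_simplex (Ys (x i)).
            Sloss (Ys (x i)) (\<Omega> (x i)) \<kappa> (gam Ys c (x i) (\<xi> i)) (s i) p
            \<le> Sloss (Ys (x i)) (\<Omega> (x i)) \<kappa> (gam Ys c (x i) (\<xi> i)) (s i) p'} = {Q i}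
       \<and> has_grad_along (Ys (x i)) (RY (Ys (x i))) (\<lambda>\<theta>. real_of_ereal (conjY (Ys (x i)) (\<Omega> (x i)) \<theta>))
           (\<lambda>y. s i y - gam Ys c (x i) (\<xi> i) y / \<kappa>) (Q i)"
proof (intro allI impI)
  fix i assume i: "i < N"
  define V where "V j P = real_of_ereal (Sloss (Ys (x j)) (\<Omega> (x j)) \<kappa> (gam Ys c (x j) (\<xi> j)) (s j) P)"
    for j P
  have Sloss_V: "Sloss (Ys (x j)) (\<Omega> (x j)) \<kappa> (gam Ys c (x j) (\<xi> j)) (s j) P = ereal (V j P)"
    if "j < N" "P \<in> prob_simplex (Ys (x j))" for j P
    using simplex_regularizer.Sloss_eq_conj_objective[OF regularizers[rule_format, OF that(1)] that(2) \<kappa>]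
    by (simp add: V_def)
  have "Sloss (Ys (x i)) (\<Omega> (x i)) \<kappa> (gam Ys c (x i) (\<xi> i)) (s i) (Q i)
      \<le> Sloss (Ys (x i)) (\<Omega> (x i)) \<kappa> (gam Ys c (x i) (\<xi> i)) (s i) p"
    if p: "p \<in> prob_simplex (Ys (x i))" for p
  proof -
    have Qp: "Q(i := p) \<in> prod_simplex N Ys x" using Q p by (simp add: prod_simplex_def)
    have "SN N Ys \<Omega> \<kappa> c x \<xi> s P = ereal (1 / real N * (\<Sum>j<N. V j (P j)))"
      if "P \<in> prod_simplex N Ys x" for P
      using that by (intro SN_eq_mean) (simp add: Sloss_V prod_simplex_def)
    then have "(\<Sum>j<N. V j (Q j)) \<le> (\<Sum>j<N. V j ((Q(i := p)) j))"
      using Q_min Q Qp N by (simp add: divide_le_cancel del: fun_upd_apply)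
    from separable_sum_le_update[where V = V and Q = Q, OF i this] have "V i (Q i) \<le> V i p" .
    then show ?thesis using Sloss_V[OF i] Q i p by (simp add: prod_simplex_def)
  qed
  then show "{p \<in> prob_simplex (Ys (x i)). \<forall>p'\<in>prob_simplex (Ys (x i)).
            Sloss (Ys (x i)) (\<Omega> (x i)) \<kappa> (gam Ys c (x i) (\<xi> i)) (s i) p
            \<le> Sloss (Ys (x i)) (\<Omega> (x i)) \<kappa> (gam Ys c (x i) (\<xi> i)) (s i) p'} = {Q i}
       \<and> has_grad_along (Ys (x i)) (RY (Ys (x i))) (\<lambda>\<theta>. real_of_ereal (conjY (Ys (x i)) (\<Omega> (x i)) \<theta>))
           (\<lambda>y. s i y - gam Ys c (x i) (\<xi> i) y / \<kappa>) (Q i)"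
    using simplex_regularizer.Sloss_argmin[OF regularizers[rule_format, OF i] \<kappa>] Q i
    by (simp add: prod_simplex_def)
qed

lemma SN_scores_argmin_eq_fyd_argmin:
  assumes Yd: "\<forall>i<N. Ys (x i) \<subseteq> Rd (d (x i))" and Q: "Q \<in> prod_simplex N Ys x"
  shows "{w \<in> W. \<forall>w'\<in>W. SN N Ys \<Omega> \<kappa> c x \<xi> (scores d Ys (\<phi> w) x) Q
                         \<le> SN N Ys \<Omega> \<kappa> c x \<xi> (scores d Ys (\<phi> w') x) Q}
       = {w \<in> W. \<forall>w'\<in>W.
           ereal (1 / real N) * (\<Sum>i<N. fyd (d (x i)) (OmegaC (Ys (x i)) (\<Omega> (x i))) (\<phi> w (x i)) (Ymat (Ys (x i)) (Q i)))
           \<le> ereal (1 / real N) * (\<Sum>i<N. fyd (d (x i)) (OmegaC (Ys (x i)) (\<Omega> (x i))) (\<phi> w' (x i)) (Ymat (Ys (x i)) (Q i)))}"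
proof -
  define a where "a i = ipY (Ys (x i)) (gam Ys c (x i) (\<xi> i)) (Q i)
      + \<kappa> * (real_of_ereal (\<Omega> (x i) (Q i)) - real_of_ereal (OmegaC (Ys (x i)) (\<Omega> (x i)) (Ymat (Ys (x i)) (Q i))))"
    for i
  define b where "b w i = real_of_ereal (fyd (d (x i)) (OmegaC (Ys (x i)) (\<Omega> (x i))) (\<phi> w (x i)) (Ymat (Ys (x i)) (Q i)))"
    for w i
  have Qi: "Q i \<in> prob_simplex (Ys (x i))" if "i < N" for i using Q that by (simp add: prod_simplex_def)
  have SN_w: "SN N Ys \<Omega> \<kappa> c x \<xi> (scores d Ys (\<phi> w) x) Q = ereal (1 / real N * (\<Sum>i<N. a i + \<kappa> * b w i))" for w
    using simplex_regularizer.Sloss_scores_eq_fyd[OF regularizers[rule_format] Yd[rule_format] Qi]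
    by (intro SN_eq_mean) (simp add: scores_def a_def b_def)
  have fyd_w: "ereal (1 / real N) * (\<Sum>i<N. fyd (d (x i)) (OmegaC (Ys (x i)) (\<Omega> (x i))) (\<phi> w (x i)) (Ymat (Ys (x i)) (Q i)))
      = ereal (1 / real N * (\<Sum>i<N. b w i))" for w
  proof -
    have "fyd (d (x i)) (OmegaC (Ys (x i)) (\<Omega> (x i))) (\<phi> w (x i)) (Ymat (Ys (x i)) (Q i)) = ereal (b w i)"
      if "i < N" for i
      using simplex_regularizer.fyd_OmegaC_Ymat[OF regularizers[rule_format, OF that] Yd[rule_format, OF that] Qi[OF that]]
      by (simp add: b_def)
    then have "(\<Sum>i<N. fyd (d (x i)) (OmegaC (Ys (x i)) (\<Omega> (x i))) (\<phi> w (x i)) (Ymat (Ys (x i)) (Q i)))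
        = (\<Sum>i<N. ereal (b w i))"
      by (intro sum.cong) auto
    then show ?thesis by simp
  qed
  have "1 / real N * (\<Sum>i<N. a i + \<kappa> * b w i) \<le> 1 / real N * (\<Sum>i<N. a i + \<kappa> * b w' i)
      \<longleftrightarrow> 1 / real N * (\<Sum>i<N. b w i) \<le> 1 / real N * (\<Sum>i<N. b w' i)" for w w'
    using N \<kappa> by (simp add: sum.distrib sum_distrib_left[symmetric] divide_le_cancel)
  then show ?thesis by (simp add: SN_w fyd_w)
qed

end

theorem proposition1:
  fixes x :: "nat \<Rightarrow> 'x" and \<xi> :: "nat \<Rightarrow> 'n" and N :: nat
    and d :: "'x \<Rightarrow> nat" and Ys :: "'x \<Rightarrow> vec set"
    and c :: "'x \<Rightarrow> vec \<Rightarrow> 'n \<Rightarrow> real" and \<Omega> :: "'x \<Rightarrow> dvec \<Rightarrow> ereal"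
    and \<phi> :: "'w \<Rightarrow> 'x \<Rightarrow> vec" and W :: "'w set" and \<kappa> :: real
    and wbar :: "nat \<Rightarrow> 'w" and q :: "nat \<Rightarrow> nat \<Rightarrow> dvec"
  assumes N: "0 < N"
    and kappa: "0 < \<kappa>"
    and Yfin: "\<forall>i<N. finite (Ys (x i))"
    and Yd: "\<forall>i<N. Ys (x i) \<subseteq> Rd (d (x i))"
    and Yext: "\<forall>i<N. no_convex_comb (Ys (x i))"
    and Om: "\<forall>i<N. proper_convex_dom_simplex (Ys (x i)) (\<Omega> (x i)) \<and> lsc_Y (Ys (x i)) (\<Omega> (x i))
                     \<and> legendre_aff_simplex (Ys (x i)) (\<Omega> (x i))"
    and phi: "\<forall>w\<in>W. \<forall>i<N. \<phi> w (x i) \<in> Rd (d (x i))"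
    and qstep: "\<forall>t. q (Suc t) \<in> prod_simplex N Ys x \<and>
       (\<forall>Q\<in>prod_simplex N Ys x.
          SN N Ys \<Omega> \<kappa> c x \<xi> (scores d Ys (\<phi> (wbar t)) x) (q (Suc t))
            \<le> SN N Ys \<Omega> \<kappa> c x \<xi> (scores d Ys (\<phi> (wbar t)) x) Q)"
    and wstep: "\<forall>t. wbar (Suc t) \<in> W \<and>
       (\<forall>w\<in>W. SN N Ys \<Omega> \<kappa> c x \<xi> (scores d Ys (\<phi> (wbar (Suc t))) x) (q (Suc t))
                \<le> SN N Ys \<Omega> \<kappa> c x \<xi> (scores d Ys (\<phi> w) x) (q (Suc t)))"
  shows "\<forall>t.
    (\<forall>i<N.
       {p \<in> prob_simplex (Ys (x i)). \<forall>p'\<in>prob_simplex (Ys (x i)).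
          Sloss (Ys (x i)) (\<Omega> (x i)) \<kappa> (gam Ys c (x i) (\<xi> i)) (scores d Ys (\<phi> (wbar t)) x i) p
          \<le> Sloss (Ys (x i)) (\<Omega> (x i)) \<kappa> (gam Ys c (x i) (\<xi> i)) (scores d Ys (\<phi> (wbar t)) x i) p'}
         = {q (Suc t) i}
     \<and> has_grad_along (Ys (x i)) (RY (Ys (x i))) (\<lambda>\<theta>. real_of_ereal (conjY (Ys (x i)) (\<Omega> (x i)) \<theta>))
          (\<lambda>y. scores d Ys (\<phi> (wbar t)) x i y - gam Ys c (x i) (\<xi> i) y / \<kappa>) (q (Suc t) i)
     \<and> Ymat (Ys (x i)) (q (Suc t) i) = (\<lambda>k. \<Sum>y\<in>Ys (x i). q (Suc t) i y * y k))
    \<and> {w \<in> W. \<forall>w'\<in>W. SN N Ys \<Omega> \<kappa> c x \<xi> (scores d Ys (\<phi> w) x) (q (Suc t))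
                       \<le> SN N Ys \<Omega> \<kappa> c x \<xi> (scores d Ys (\<phi> w') x) (q (Suc t))}
      = {w \<in> W. \<forall>w'\<in>W.
           ereal (1 / real N) * (\<Sum>i<N. fyd (d (x i)) (OmegaC (Ys (x i)) (\<Omega> (x i))) (\<phi> w (x i)) (Ymat (Ys (x i)) (q (Suc t) i)))
           \<le> ereal (1 / real N) * (\<Sum>i<N. fyd (d (x i)) (OmegaC (Ys (x i)) (\<Omega> (x i))) (\<phi> w' (x i)) (Ymat (Ys (x i)) (q (Suc t) i)))}
    \<and> wbar (Suc t) \<in> {w \<in> W. \<forall>w'\<in>W.
           ereal (1 / real N) * (\<Sum>i<N. fyd (d (x i)) (OmegaC (Ys (x i)) (\<Omega> (x i))) (\<phi> w (x i)) (Ymat (Ys (x i)) (q (Suc t) i)))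
           \<le> ereal (1 / real N) * (\<Sum>i<N. fyd (d (x i)) (OmegaC (Ys (x i)) (\<Omega> (x i))) (\<phi> w' (x i)) (Ymat (Ys (x i)) (q (Suc t) i)))}"
proof -
  have regularizers: "\<forall>i<N. simplex_regularizer (Ys (x i)) (\<Omega> (x i))"
    using Yfin Om by (simp add: simplex_regularizer_def)
  show ?thesis (is "\<forall>t. ?P t")
  proof
    fix t
    have q: "q (Suc t) \<in> prod_simplex N Ys x" using qstep by blast
    note samplewise = SN_argmin_samplewise[OF N kappa regularizers q qstep[rule_format, THEN conjunct2]]
    note argmin_eq = SN_scores_argmin_eq_fyd_argmin[OF N kappa regularizers Yd q, where W = W and \<phi> = \<phi>]
    note wbar_min = argmin_eq[THEN equalityD1, THEN subsetD, OF CollectI, OF wstep[rule_format, of t]]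
    show "?P t" using samplewise argmin_eq wbar_min unfolding Ymat_def by blast
  qed
qed

end
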